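(* Let $p\in[0,1]$ be unknown, and let $\theta\in[0,1)$, $\eta\in(0,1)$ with $\theta+\eta<1$, and $\delta\in(0,1]$. Suppose \textsc{Tester} is a procedure satisfying the tester guarantee described in the context. Then the algorithm \textsc{BinCert}$(\theta,\eta,\delta)$ (defined in the context) terminates, and $$\Pr[\textsc{BinCert}(\theta,\eta,\delta)\text{ returns Yes}]\ge 1-\delta \quad\text{whenever } p\le\theta,$$ $$\Pr[\textsc{BinCert}(\theta,\eta,\delta)\text{ returns No}]\ge 1-\delta \quad\text{whenever } p>\theta+\eta.$$
   Context: Setting: there is an unknown number $p\in[0,1]$ (the probability that a 0-1 property holds on a random input). A procedure $\textsc{Tester}(a,b,\delta')$, for $0\le a<b\le 1$ and $\delta'\in(0,1]$, is a randomized procedure returning one of Yes, No, None, using fresh randomness independent of all other calls, and satisfying the tester guarantee: if $p\le a$ then $\Pr[\textsc{Tester}(a,b,\delta')\text{ returns Yes}]\ge 1-\delta'$, and if $p> b$ then $\Pr[\textsc{Tester}(a,b,\delta')\text{ returns No}]\ge 1-\delta'$. Algorithm $\textsc{BinCert}(\theta,\eta,\delta)$: Let $\log$ denote $\log_2$ and set $n=3+\max(0,\log(\theta/\eta))+\max(0,\log((1-\theta-\eta)/\eta))$ (where $\max(0,\log(\theta/\eta))$ is taken to be $0$ if $\theta=0$), and $\delta_{\min}=\delta/n$. The algorithm maintains a "left" interval $(a_L,b_L)$ and a "right" interval $(a_R,b_R)$, both initially undefined. The left update is: if $\theta=0$, set $(a_L,b_L)=(0,\eta)$; otherwise, if the left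 interval is undefined, set it to $(0,\theta)$; otherwise with $\alpha=b_L-a_L$ set it to $(b_L-\max(\eta,\alpha/2),\,b_L)$. The right update is: if the right interval is undefined, set it to $(\theta+\eta,1)$; otherwise with $\alpha=b_R-a_R$ set it to $(a_R,\,a_R+\max(\eta,\alpha/2))$. The algorithm repeats the following loop: (1) perform the left update; if $b_L-a_L>\eta$, call $\textsc{Tester}(a_L,b_L,\delta_{\min})$ and if it returns Yes, return Yes. (2) Perform the right update; if $b_R-a_R>\eta$, call $\textsc{Tester}(a_R,b_R,\delta_{\min})$ and if it returns No, return No. (3) If $b_R-a_R\le\eta$ and $b_L-a_L\le\eta$, return the output of $\textsc{Tester}(\theta,\theta+\eta,\delta_{\min})$. *)

theory Defs
  imports "HOL-Probability.Probability"
begin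

text \<open>Outputs of Tester / BinCert: Yes, No, None (the latter called Undecided here
  to avoid a clash with the option constructor).\<close>
datatype answer = Yes | No | Undecided

text \<open>A tester is modelled as a function from the arguments (a, b, delta') to a
  probability distribution over outputs; each call samples freshly (monadic bind).\<close>
type_synonym tester = "real \<Rightarrow> real \<Rightarrow> real \<Rightarrow> answer pmf"

definition tester_guarantee :: "real \<Rightarrow> tester \<Rightarrow> bool" where
  "tester_guarantee p T \<longleftrightarrow>
     (\<forall>a b d. 0 \<le> a \<and> a < b \<and> b \<le> 1 \<and> 0 < d \<and> d \<le> 1 \<longrightarrow>
        (p \<le> a \<longrightarrow> pmf (T a b d) Yes \<ge> 1 - d) \<and>
        (p > b \<longrightarrow> pmf (T a b d) No \<ge> 1 - d))"

definition left_update :: "real \<Rightarrow> real \<Rightarrow> (real \<times> real) option \<Rightarrow> real \<times> real" where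
  "left_update \<theta> \<eta> L =
     (if \<theta> = 0 then (0, \<eta>)
      else (case L of None \<Rightarrow> (0, \<theta>)
            | Some (a, b) \<Rightarrow> (b - max \<eta> ((b - a) / 2), b)))"

definition right_update :: "real \<Rightarrow> real \<Rightarrow> (real \<times> real) option \<Rightarrow> real \<times> real" where
  "right_update \<theta> \<eta> R =
     (case R of None \<Rightarrow> (\<theta> + \<eta>, 1)
      | Some (a, b) \<Rightarrow> (a, a + max \<eta> ((b - a) / 2)))"

text \<open>One iteration of the main loop, with the current left/right intervals
  (None = undefined). dm is delta_min.\<close>
partial_function (spmf) bincert_loop ::
  "real \<Rightarrow> real \<Rightarrow> real \<Rightarrow> tester \<Rightarrow> (real \<times> real) option \<Rightarrow> (real \<times> real) option \<Rightarrow> answer spmf"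
where
  "bincert_loop \<theta> \<eta> dm T L R =
    (if snd (left_update \<theta> \<eta> L) - fst (left_update \<theta> \<eta> L) > \<eta>
     then bind_spmf (spmf_of_pmf (T (fst (left_update \<theta> \<eta> L)) (snd (left_update \<theta> \<eta> L)) dm))
            (\<lambda>x. if x = Yes then return_spmf Yes else (if snd (right_update \<theta> \<eta> R) - fst (right_update \<theta> \<eta> R) > \<eta>
              then bind_spmf (spmf_of_pmf (T (fst (right_update \<theta> \<eta> R)) (snd (right_update \<theta> \<eta> R)) dm))
                     (\<lambda>y. if y = No then return_spmf No else (if snd (right_update \<theta> \<eta> R) - fst (right_update \<theta> \<eta> R) \<le> \<eta>
                   \<and> snd (left_update \<theta> \<eta> L) - fst (left_update \<theta> \<eta> L) \<le> \<eta>
                then spmf_of_pmf (T \<theta> (\<theta> + \<eta>) dm)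
                else bincert_loop \<theta> \<eta> dm T (Some (left_update \<theta> \<eta> L)) (Some (right_update \<theta> \<eta> R))))
              else (if snd (right_update \<theta> \<eta> R) - fst (right_update \<theta> \<eta> R) \<le> \<eta>
                   \<and> snd (left_update \<theta> \<eta> L) - fst (left_update \<theta> \<eta> L) \<le> \<eta>
                then spmf_of_pmf (T \<theta> (\<theta> + \<eta>) dm)
                else bincert_loop \<theta> \<eta> dm T (Some (left_update \<theta> \<eta> L)) (Some (right_update \<theta> \<eta> R)))))
     else (if snd (right_update \<theta> \<eta> R) - fst (right_update \<theta> \<eta> R) > \<eta>
              then bind_spmf (spmf_of_pmf (T (fst (right_update \<theta> \<eta> R)) (snd (right_update \<theta> \<eta> R)) dm))
                     (\<lambda>y. if y = No then return_spmf No else (if snd (right_update \<theta> \<eta> R) - fst (right_update \<theta> \<eta> R) \<le> \<eta>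
                   \<and> snd (left_update \<theta> \<eta> L) - fst (left_update \<theta> \<eta> L) \<le> \<eta>
                then spmf_of_pmf (T \<theta> (\<theta> + \<eta>) dm)
                else bincert_loop \<theta> \<eta> dm T (Some (left_update \<theta> \<eta> L)) (Some (right_update \<theta> \<eta> R))))
              else (if snd (right_update \<theta> \<eta> R) - fst (right_update \<theta> \<eta> R) \<le> \<eta>
                   \<and> snd (left_update \<theta> \<eta> L) - fst (left_update \<theta> \<eta> L) \<le> \<eta>
                then spmf_of_pmf (T \<theta> (\<theta> + \<eta>) dm)
                else bincert_loop \<theta> \<eta> dm T (Some (left_update \<theta> \<eta> L)) (Some (right_update \<theta> \<eta> R)))))"

definition bincert_n :: "real \<Rightarrow> real \<Rightarrow> real" where
  "bincert_n \<theta> \<eta> =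
     3 + (if \<theta> = 0 then 0 else max 0 (log 2 (\<theta> / \<eta>)))
       + max 0 (log 2 ((1 - \<theta> - \<eta>) / \<eta>))"

definition bincert :: "real \<Rightarrow> real \<Rightarrow> real \<Rightarrow> tester \<Rightarrow> answer spmf" where
  "bincert \<theta> \<eta> \<delta> T = bincert_loop \<theta> \<eta> (\<delta> / bincert_n \<theta> \<eta>) T None None"

end

theory Submission
  imports Defs
begin

text \<open>Every left test is run on an interval ending at \<open>\<theta>\<close> and every right test on an
  interval starting at \<open>\<theta> + \<eta>\<close>. Hence, if \<open>p \<le> \<theta>\<close>, the algorithm can only err through
  a right test answering No or through the final test, and symmetrically if \<open>p > \<theta> + \<eta>\<close>.
  The right interval starts with width \<open>w = 1 - \<theta> - \<eta>\<close> and is halved until its width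
  is \<open>\<eta>\<close>, so there are at most \<open>2 + log 2 (w / \<eta>) \<le> n\<close> such tests (likewise on the
  left), each erring with probability at most \<open>\<delta> / n\<close>; the union bound gives \<open>\<delta>\<close>.\<close>

definition width :: "real \<times> real \<Rightarrow> real" where
  "width I = snd I - fst I"

definition certifies :: "real \<Rightarrow> real \<Rightarrow> real \<Rightarrow> answer spmf \<Rightarrow> real \<Rightarrow> real \<Rightarrow> bool" where
  "certifies p \<theta> \<eta> M err_yes err_no \<longleftrightarrow>
     lossless_spmf M \<and> (p \<le> \<theta> \<longrightarrow> 1 - err_yes \<le> spmf M Yes)
       \<and> (\<theta> + \<eta> < p \<longrightarrow> 1 - err_no \<le> spmf M No)"

lemma certifies_mono:
  "certifies p \<theta> \<eta> M e1 e2 \<Longrightarrow> e1 \<le> e1' \<Longrightarrow> e2 \<le> e2' \<Longrightarrow> certifies p \<theta> \<eta> M e1' e2'"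
  unfolding certifies_def by auto

definition early_exit :: "bool \<Rightarrow> 'a pmf \<Rightarrow> 'a \<Rightarrow> 'a spmf \<Rightarrow> 'a spmf" where
  "early_exit c q b C = (if c then bind_pmf q (\<lambda>x. if x = b then return_spmf b else C) else C)"

lemma spmf_bind_exit:
  "spmf (bind_pmf q (\<lambda>x. if x = b then return_spmf b else C)) a =
     pmf q b * indicator {b} a + (1 - pmf q b) * spmf C a"
proof -
  have "spmf (bind_pmf q (\<lambda>x. if x = b then return_spmf b else C)) a =
      (\<integral>x. spmf C a + (indicator {b} a - spmf C a) * indicator {b} x \<partial>measure_pmf q)"
    by (auto simp: pmf_bind intro!: Bochner_Integration.integral_cong split: split_indicator)
  also have "\<dots> = spmf C a + (indicator {b} a - spmf C a) * pmf q b"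
    by (subst Bochner_Integration.integral_add)
       (auto simp: measure_pmf.emeasure_eq_measure measure_pmf_single)
  finally show ?thesis by (simp add: algebra_simps)
qed

lemma lossless_early_exit: "lossless_spmf C \<Longrightarrow> lossless_spmf (early_exit c q b C)"
  by (simp add: early_exit_def)

lemma spmf_early_exit_exit: "spmf C b \<le> spmf (early_exit c q b C) b"
proof -
  have "spmf C b \<le> pmf q b + (1 - pmf q b) * spmf C b"
    using pmf_le_1[of C "Some b"] mult_left_le[of "spmf C b" "pmf q b"]
    by (simp add: algebra_simps)
  then show ?thesis by (simp add: early_exit_def spmf_bind_exit)
qed

lemma spmf_early_exit_continue:
  assumes "a \<noteq> b" and "c \<Longrightarrow> pmf q b \<le> d"
  shows "spmf C a - (if c then d else 0) \<le> spmf (early_exit c q b C) a"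
proof (cases c)
  case True
  have "pmf q b * spmf C a \<le> d"
    using mult_left_le[OF pmf_le_1[of C "Some a"], of "pmf q b"] assms(2)[OF True] by simp
  then show ?thesis using True assms(1) by (simp add: early_exit_def spmf_bind_exit algebra_simps)
qed (simp add: early_exit_def)

lemma certifies_early_exit_Yes:
  assumes "certifies p \<theta> \<eta> C err_yes err_no"
    and "c \<Longrightarrow> \<theta> + \<eta> < p \<Longrightarrow> pmf q Yes \<le> d"
  shows "certifies p \<theta> \<eta> (early_exit c q Yes C) err_yes (err_no + (if c then d else 0))"
  using assms lossless_early_exit spmf_early_exit_exit[of C Yes c q]
    spmf_early_exit_continue[of No Yes c q d C]
  unfolding certifies_def by fastforce

lemma certifies_early_exit_No:
  assumes "certifies p \<theta> \<eta> C err_yes err_no"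
    and "c \<Longrightarrow> p \<le> \<theta> \<Longrightarrow> pmf q No \<le> d"
  shows "certifies p \<theta> \<eta> (early_exit c q No C) (err_yes + (if c then d else 0)) err_no"
  using assms lossless_early_exit spmf_early_exit_exit[of C No c q]
    spmf_early_exit_continue[of Yes No c q d C]
  unfolding certifies_def by fastforce

lemma pmf_add_pmf_le_1: "x \<noteq> y \<Longrightarrow> pmf q x + pmf q y \<le> 1"
  using measure_pmf.prob_le_1[of q "{x, y}"] by (simp add: measure_measure_pmf_finite)

lemma tester_Yes_error:
  assumes "tester_guarantee p T" "0 \<le> a" "a < b" "b \<le> 1" "0 < d" "d \<le> 1" "b < p"
  shows "pmf (T a b d) Yes \<le> d"
  using assms pmf_add_pmf_le_1[of Yes No "T a b d"] unfolding tester_guarantee_def by fastforce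

lemma tester_No_error:
  assumes "tester_guarantee p T" "0 \<le> a" "a < b" "b \<le> 1" "0 < d" "d \<le> 1" "p \<le> a"
  shows "pmf (T a b d) No \<le> d"
  using assms pmf_add_pmf_le_1[of Yes No "T a b d"] unfolding tester_guarantee_def by fastforce

lemma certifies_tester:
  assumes "tester_guarantee p T" "0 \<le> \<theta>" "0 < \<eta>" "\<theta> + \<eta> \<le> 1" "0 < d" "d \<le> 1"
  shows "certifies p \<theta> \<eta> (spmf_of_pmf (T \<theta> (\<theta> + \<eta>) d)) d d"
  using assms unfolding certifies_def tester_guarantee_def by simp

text \<open>An interval of width \<open>w\<close> is halved at most \<open>1 + log 2 (w / \<eta>)\<close> times before its
  width drops to \<open>\<eta>\<close>; one more test is the final one.\<close>

definition test_budget :: "real \<Rightarrow> real \<Rightarrow> real" where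
  "test_budget \<eta> w = (if w \<le> \<eta> then 1 else 2 + log 2 (w / \<eta>))"

lemma test_budget_halve:
  assumes "0 < \<eta>"
  shows "test_budget \<eta> (max \<eta> (w / 2)) \<le> test_budget \<eta> w - (if \<eta> < w then 1 else 0)"
proof (cases "w / 2 \<le> \<eta>")
  case True
  have "\<eta> < w \<Longrightarrow> 0 < log 2 (w / \<eta>)" using assms by simp
  then show ?thesis using True assms by (auto simp: test_budget_def)
next
  case False
  have "log 2 (w / 2 / \<eta>) = log 2 (w / \<eta>) - 1"
  proof -
    have "log 2 (w / 2 / \<eta>) = log 2 ((w / \<eta>) / 2)" by (simp add: mult.commute)
    also have "\<dots> = log 2 (w / \<eta>) - 1"
      using False assms by (subst log_divide) auto
    finally show ?thesis .
  qed
  then show ?thesis using False assms by (simp add: test_budget_def)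
qed

lemma width_left_update_Some:
  "0 < \<eta> \<Longrightarrow> width (left_update \<theta> \<eta> (Some (left_update \<theta> \<eta> L)))
     = max \<eta> (width (left_update \<theta> \<eta> L) / 2)"
  by (cases "left_update \<theta> \<eta> L") (auto simp: width_def left_update_def)

lemma width_right_update_Some:
  "width (right_update \<theta> \<eta> (Some I)) = max \<eta> (width I / 2)"
  by (cases I) (simp add: width_def right_update_def)

text \<open>For \<open>\<theta> = 0\<close> the left interval is always \<open>(0, \<eta>)\<close> and is never tested.\<close>

definition left_invariant :: "real \<Rightarrow> real \<Rightarrow> (real \<times> real) option \<Rightarrow> bool" where
  "left_invariant \<theta> \<eta> L \<longleftrightarrow>
     \<theta> = 0 \<or> (snd (left_update \<theta> \<eta> L) = \<theta> \<and> width (left_update \<theta> \<eta> L) \<le> max \<eta> \<theta>)"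

definition right_invariant :: "real \<Rightarrow> real \<Rightarrow> (real \<times> real) option \<Rightarrow> bool" where
  "right_invariant \<theta> \<eta> R \<longleftrightarrow>
     fst (right_update \<theta> \<eta> R) = \<theta> + \<eta> \<and> width (right_update \<theta> \<eta> R) \<le> max \<eta> (1 - \<theta> - \<eta>)"

lemma left_invariant_None: "left_invariant \<theta> \<eta> None"
  by (simp add: left_invariant_def left_update_def width_def)

lemma right_invariant_None: "right_invariant \<theta> \<eta> None"
  by (simp add: right_invariant_def right_update_def width_def)

lemma left_invariant_Some:
  assumes "0 < \<eta>" "left_invariant \<theta> \<eta> L"
  shows "left_invariant \<theta> \<eta> (Some (left_update \<theta> \<eta> L))"
  using assms width_left_update_Some[OF assms(1), of \<theta> L]
  by (cases "left_update \<theta> \<eta> L") (auto simp: left_invariant_def left_update_def)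

lemma right_invariant_Some:
  assumes "0 < \<eta>" "right_invariant \<theta> \<eta> R"
  shows "right_invariant \<theta> \<eta> (Some (right_update \<theta> \<eta> R))"
proof -
  have "fst (right_update \<theta> \<eta> (Some (right_update \<theta> \<eta> R))) = fst (right_update \<theta> \<eta> R)"
    by (cases "right_update \<theta> \<eta> R") (simp add: right_update_def)
  moreover have "max \<eta> (width (right_update \<theta> \<eta> R) / 2) \<le> max \<eta> (1 - \<theta> - \<eta>)"
    using assms unfolding right_invariant_def by (auto simp: max_def)
  ultimately show ?thesis
    using assms width_right_update_Some by (simp add: right_invariant_def)
qed

lemma left_test_interval:
  assumes "0 < \<eta>" "left_invariant \<theta> \<eta> L" "\<eta> < width (left_update \<theta> \<eta> L)"
  shows "0 \<le> fst (left_update \<theta> \<eta> L) \<and> fst (left_update \<theta> \<eta> L) < snd (left_update \<theta> \<eta> L)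
    \<and> snd (left_update \<theta> \<eta> L) = \<theta>"
  using assms by (auto simp: left_invariant_def width_def left_update_def)

lemma right_test_interval:
  assumes "0 < \<eta>" "right_invariant \<theta> \<eta> R" "\<eta> < width (right_update \<theta> \<eta> R)"
  shows "fst (right_update \<theta> \<eta> R) = \<theta> + \<eta> \<and> fst (right_update \<theta> \<eta> R) < snd (right_update \<theta> \<eta> R)
    \<and> snd (right_update \<theta> \<eta> R) \<le> 1"
  using assms unfolding right_invariant_def width_def by (simp add: max_def split: if_splits)

lemma bincert_loop_unfold:
  "bincert_loop \<theta> \<eta> dm T L R =
    (let I = left_update \<theta> \<eta> L; J = right_update \<theta> \<eta> R in
     early_exit (\<eta> < width I) (T (fst I) (snd I) dm) Yes
      (early_exit (\<eta> < width J) (T (fst J) (snd J) dm) No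
        (if width J \<le> \<eta> \<and> width I \<le> \<eta> then spmf_of_pmf (T \<theta> (\<theta> + \<eta>) dm)
         else bincert_loop \<theta> \<eta> dm T (Some I) (Some J))))"
  unfolding early_exit_def width_def Let_def by (subst bincert_loop.simps) (simp only: bind_spmf_of_pmf)

lemma bincert_loop_step:
  assumes "0 < \<eta>" "0 \<le> \<theta>" "\<theta> + \<eta> \<le> 1" "0 < dm" "dm \<le> 1" "tester_guarantee p T"
    and "left_invariant \<theta> \<eta> L" "right_invariant \<theta> \<eta> R"
  defines "I \<equiv> left_update \<theta> \<eta> L" and "J \<equiv> right_update \<theta> \<eta> R"
  assumes recursion: "\<not> (width J \<le> \<eta> \<and> width I \<le> \<eta>) \<Longrightarrow>
      certifies p \<theta> \<eta> (bincert_loop \<theta> \<eta> dm T (Some I) (Some J))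
        (dm * test_budget \<eta> (max \<eta> (width J / 2))) (dm * test_budget \<eta> (max \<eta> (width I / 2)))"
  shows "certifies p \<theta> \<eta> (bincert_loop \<theta> \<eta> dm T L R)
    (dm * test_budget \<eta> (width J)) (dm * test_budget \<eta> (width I))"
proof -
  define F where "F = (if width J \<le> \<eta> \<and> width I \<le> \<eta> then spmf_of_pmf (T \<theta> (\<theta> + \<eta>) dm)
    else bincert_loop \<theta> \<eta> dm T (Some I) (Some J))"
  have halve: "dm * test_budget \<eta> (max \<eta> (w / 2))
      \<le> dm * test_budget \<eta> w - (if \<eta> < w then dm else 0)" for w
    using mult_left_mono[OF test_budget_halve[OF assms(1)], of dm w] assms(4)
    by (auto simp: right_diff_distrib split: if_splits)
  have F: "certifies p \<theta> \<eta> F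
      (dm * test_budget \<eta> (width J) - (if \<eta> < width J then dm else 0))
      (dm * test_budget \<eta> (width I) - (if \<eta> < width I then dm else 0))"
  proof (cases "width J \<le> \<eta> \<and> width I \<le> \<eta>")
    case True
    then show ?thesis
      using certifies_tester[OF assms(6,2,1,3,4,5)] by (simp add: F_def test_budget_def)
  next
    case False
    then have "F = bincert_loop \<theta> \<eta> dm T (Some I) (Some J)" unfolding F_def by (rule if_not_P)
    with certifies_mono[OF recursion[OF False] halve halve] show ?thesis by simp
  qed
  have right_error: "pmf (T (fst J) (snd J) dm) No \<le> dm" if "\<eta> < width J" "p \<le> \<theta>"
    using right_test_interval[OF assms(1,8)] that assms(1,2,4,5)
    by (intro tester_No_error[OF assms(6)]) (auto simp: J_def)
  have left_error: "pmf (T (fst I) (snd I) dm) Yes \<le> dm" if "\<eta> < width I" "\<theta> + \<eta> < p"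
    using left_test_interval[OF assms(1,7)] that assms(1,3,4,5)
    by (intro tester_Yes_error[OF assms(6)]) (auto simp: I_def)
  have "certifies p \<theta> \<eta> (early_exit (\<eta> < width J) (T (fst J) (snd J) dm) No F)
      (dm * test_budget \<eta> (width J)) (dm * test_budget \<eta> (width I) - (if \<eta> < width I then dm else 0))"
    using certifies_early_exit_No[OF F, of "\<eta> < width J" "T (fst J) (snd J) dm" dm] right_error
    by simp
  then have "certifies p \<theta> \<eta> (early_exit (\<eta> < width I) (T (fst I) (snd I) dm) Yes
      (early_exit (\<eta> < width J) (T (fst J) (snd J) dm) No F))
    (dm * test_budget \<eta> (width J)) (dm * test_budget \<eta> (width I))"
    using certifies_early_exit_Yes[OF _ left_error] by fastforce
  then show ?thesis
    unfolding bincert_loop_unfold[of \<theta> \<eta> dm T L R] F_def I_def J_def Let_def .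
qed

lemma bincert_loop_certifies:
  assumes "0 < \<eta>" "0 \<le> \<theta>" "\<theta> + \<eta> \<le> 1" "0 < dm" "dm \<le> 1" "tester_guarantee p T"
  shows "left_invariant \<theta> \<eta> L \<Longrightarrow> right_invariant \<theta> \<eta> R \<Longrightarrow>
    width (left_update \<theta> \<eta> L) \<le> \<eta> * 2 ^ k \<Longrightarrow> width (right_update \<theta> \<eta> R) \<le> \<eta> * 2 ^ k \<Longrightarrow>
    certifies p \<theta> \<eta> (bincert_loop \<theta> \<eta> dm T L R)
      (dm * test_budget \<eta> (width (right_update \<theta> \<eta> R)))
      (dm * test_budget \<eta> (width (left_update \<theta> \<eta> L)))"
proof (induction k arbitrary: L R)
  case 0
  then show ?case by (intro bincert_loop_step[OF assms]) auto
next
  case (Suc k)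
  show ?case
  proof (rule bincert_loop_step[OF assms Suc.prems(1,2)])
    have "max \<eta> (w / 2) \<le> \<eta> * 2 ^ k" if "w \<le> \<eta> * 2 ^ Suc k" for w
      using that assms(1) by simp
    then show "certifies p \<theta> \<eta>
        (bincert_loop \<theta> \<eta> dm T (Some (left_update \<theta> \<eta> L)) (Some (right_update \<theta> \<eta> R)))
        (dm * test_budget \<eta> (max \<eta> (width (right_update \<theta> \<eta> R) / 2)))
        (dm * test_budget \<eta> (max \<eta> (width (left_update \<theta> \<eta> L) / 2)))"
      using Suc.IH[OF left_invariant_Some[OF assms(1) Suc.prems(1)]
          right_invariant_Some[OF assms(1) Suc.prems(2)]] Suc.prems(3,4) assms(1)
      by (simp add: width_left_update_Some width_right_update_Some)
  qed
qed

theorem theorem1: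
  fixes p \<theta> \<eta> \<delta> :: real and T :: tester
  assumes "0 \<le> p" "p \<le> 1"
    and "0 \<le> \<theta>" "\<theta> < 1" "0 < \<eta>" "\<eta> < 1" "\<theta> + \<eta> < 1"
    and "0 < \<delta>" "\<delta> \<le> 1"
    and "tester_guarantee p T"
  shows "lossless_spmf (bincert \<theta> \<eta> \<delta> T)
    \<and> (p \<le> \<theta> \<longrightarrow> spmf (bincert \<theta> \<eta> \<delta> T) Yes \<ge> 1 - \<delta>)
    \<and> (p > \<theta> + \<eta> \<longrightarrow> spmf (bincert \<theta> \<eta> \<delta> T) No \<ge> 1 - \<delta>)"
proof -
  let ?n = "bincert_n \<theta> \<eta>" and ?I = "left_update \<theta> \<eta> None" and ?J = "right_update \<theta> \<eta> None"
  have n: "3 \<le> ?n" by (auto simp: bincert_n_def)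
  have dm: "0 < \<delta> / ?n" "\<delta> / ?n \<le> 1" "\<delta> / ?n * ?n = \<delta>"
    using n assms(8,9) by (auto simp: field_simps)
  obtain k :: nat where "1 / \<eta> < 2 ^ k" using real_arch_pow[of 2 "1 / \<eta>"] by auto
  then have "1 < \<eta> * 2 ^ k" using assms(5) by (simp add: field_simps)
  have I: "width ?I = (if \<theta> = 0 then \<eta> else \<theta>)" and J: "width ?J = 1 - \<theta> - \<eta>"
    by (simp_all add: width_def left_update_def right_update_def)
  then have widths: "width ?I \<le> \<eta> * 2 ^ k" "width ?J \<le> \<eta> * 2 ^ k"
    using \<open>1 < \<eta> * 2 ^ k\<close> assms by auto
  have "test_budget \<eta> (width ?I) \<le> ?n" "test_budget \<eta> (width ?J) \<le> ?n"
    unfolding I J test_budget_def bincert_n_def by auto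
  then have "\<delta> / ?n * test_budget \<eta> (width ?J) \<le> \<delta>" "\<delta> / ?n * test_budget \<eta> (width ?I) \<le> \<delta>"
    using dm by (metis less_imp_le mult_left_mono)+
  with bincert_loop_certifies[OF assms(5,3) less_imp_le[OF assms(7)] dm(1,2) assms(10)
      left_invariant_None right_invariant_None widths]
  have "certifies p \<theta> \<eta> (bincert \<theta> \<eta> \<delta> T) \<delta> \<delta>"
    unfolding bincert_def by (blast intro: certifies_mono)
  then show ?thesis by (simp add: certifies_def)
qed

end
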